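(* Let $A$ be a strongly indecomposable torsion-free Abelian group of finite rank with $A=\mathrm{PSoc}\,A$. Then $\mathrm{End}\,A$ is centrally essential if and only if $\mathrm{End}\,A$ is commutative.
   Context: All rings are associative with non-zero identity. A ring $R$ is centrally essential if for every non-zero $a\in R$ there exist non-zero elements $x,y$ of the center of $R$ with $ax=y$. For torsion-free Abelian groups $B,D$, $B\doteq D$ means $nB\subseteq D$ and $mD\subseteq B$ for some positive integers $n,m$; a torsion-free group $A$ is strongly indecomposable if it has no quasi-decomposition $A\doteq B\oplus D$ with $B,D$ non-zero. The pseudo-socle $\mathrm{PSoc}\,A$ is the pure subgroup of $A$ generated by all minimal non-zero pure fully invariant subgroups of $A$. *)

theory Defs
  imports Main
begin

text \<open>The Abelian group A is modelled as the whole carrier of a type 'a of class ab_group_add.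
Endomorphisms are additive self-maps; the ring End A has composition as multiplication.\<close>

definition nsmul :: "nat \<Rightarrow> 'a::ab_group_add \<Rightarrow> 'a" where
  "nsmul n x = (\<Sum>i<n. x)"

definition zsmul :: "int \<Rightarrow> 'a::ab_group_add \<Rightarrow> 'a" where
  "zsmul k x = (if 0 \<le> k then nsmul (nat k) x else - nsmul (nat (- k)) x)"

definition torsion_free :: "'a::ab_group_add itself \<Rightarrow> bool" where
  "torsion_free _ \<longleftrightarrow> (\<forall>(n::nat) (x::'a). 0 < n \<longrightarrow> nsmul n x = 0 \<longrightarrow> x = 0)"

definition lin_indep :: "'a::ab_group_add set \<Rightarrow> bool" where
  "lin_indep S \<longleftrightarrow> finite S \<and>
     (\<forall>c::'a \<Rightarrow> int. (\<Sum>s\<in>S. zsmul (c s) s) = 0 \<longrightarrow> (\<forall>s\<in>S. c s = 0))"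

definition finite_rank :: "'a::ab_group_add itself \<Rightarrow> bool" where
  "finite_rank _ \<longleftrightarrow> (\<exists>n. \<forall>S::'a set. lin_indep S \<longrightarrow> card S \<le> n)"

definition is_subgroup :: "'a::ab_group_add set \<Rightarrow> bool" where
  "is_subgroup B \<longleftrightarrow> 0 \<in> B \<and> (\<forall>x\<in>B. \<forall>y\<in>B. x + y \<in> B) \<and> (\<forall>x\<in>B. - x \<in> B)"

definition End_grp :: "('a::ab_group_add \<Rightarrow> 'a) set" where
  "End_grp = {f. \<forall>x y. f (x + y) = f x + f y}"

definition strongly_indecomposable :: "'a::ab_group_add itself \<Rightarrow> bool" where
  "strongly_indecomposable _ \<longleftrightarrow>
     \<not> (\<exists>(B::'a set) D n. is_subgroup B \<and> is_subgroup D \<and> B \<noteq> {0} \<and> D \<noteq> {0} \<and>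
          B \<inter> D = {0} \<and> 0 < n \<and> (\<forall>x. \<exists>b\<in>B. \<exists>d\<in>D. nsmul n x = b + d))"

definition pure_subgroup :: "'a::ab_group_add set \<Rightarrow> bool" where
  "pure_subgroup B \<longleftrightarrow> is_subgroup B \<and>
     (\<forall>n y. 0 < n \<longrightarrow> nsmul n y \<in> B \<longrightarrow> (\<exists>b\<in>B. nsmul n b = nsmul n y))"

definition fully_invariant :: "'a::ab_group_add set \<Rightarrow> bool" where
  "fully_invariant B \<longleftrightarrow> (\<forall>f\<in>End_grp. f ` B \<subseteq> B)"

definition pure_fi :: "'a::ab_group_add set \<Rightarrow> bool" where
  "pure_fi B \<longleftrightarrow> pure_subgroup B \<and> fully_invariant B"

definition minimal_pure_fi :: "'a::ab_group_add set \<Rightarrow> bool" where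
  "minimal_pure_fi B \<longleftrightarrow> pure_fi B \<and> B \<noteq> {0} \<and>
     (\<forall>C. pure_fi C \<and> C \<noteq> {0} \<and> C \<subseteq> B \<longrightarrow> C = B)"

definition pure_hull :: "'a::ab_group_add set \<Rightarrow> 'a set" where
  "pure_hull S = \<Inter>{B. pure_subgroup B \<and> S \<subseteq> B}"

definition PSoc :: "'a::ab_group_add itself \<Rightarrow> 'a set" where
  "PSoc _ = pure_hull (\<Union>{B::'a set. minimal_pure_fi B})"

definition End_center :: "('a::ab_group_add \<Rightarrow> 'a) set" where
  "End_center = {z \<in> End_grp. \<forall>f\<in>End_grp. z \<circ> f = f \<circ> z}"

definition End_centrally_essential :: "'a::ab_group_add itself \<Rightarrow> bool" where
  "End_centrally_essential _ \<longleftrightarrow>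
     (\<forall>a\<in>(End_grp :: ('a \<Rightarrow> 'a) set). a \<noteq> (\<lambda>_. 0) \<longrightarrow>
        (\<exists>x\<in>End_center. \<exists>y\<in>End_center. x \<noteq> (\<lambda>_. 0) \<and> y \<noteq> (\<lambda>_. 0) \<and> a \<circ> x = y))"

definition End_commutative :: "'a::ab_group_add itself \<Rightarrow> bool" where
  "End_commutative _ \<longleftrightarrow> (\<forall>f\<in>(End_grp :: ('a \<Rightarrow> 'a) set). \<forall>g\<in>End_grp. f \<circ> g = g \<circ> f)"

end

theory Submission
  imports Defs HOL.Modules
begin

text \<open>
  A nonzero central endomorphism x of A cannot be nilpotent: its kernel is a pure fully invariant
  subgroup, and a minimal pure fully invariant subgroup M either lies in that kernel or meets it
  trivially, in which case x would be injective on M and a nilpotent x would force M = 0.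
  So a nilpotent central x kills the pseudo-socle, which is all of A.

  By Fitting's lemma for strongly indecomposable groups of finite rank every endomorphism is
  nilpotent or has image of finite index: the kernels of the powers of x stabilise up to torsion
  (their ranks are bounded), so for p = x^k the map p is injective on pA, an injective endomorphism
  of a group of finite rank has image of finite index, and A is quasi-equal to ker p \<oplus> pA.

  Now let End A be centrally essential, f \<noteq> 0 and g arbitrary, and pick central x \<noteq> 0 with fx
  central. Then fg and gf agree on xA, hence on nA for some n > 0, hence everywhere because A is
  torsion-free. Conversely, in a commutative ring a \<noteq> 0 satisfies a \<cdot> 1 = a.
\<close>

section \<open>Integer multiples and endomorphisms\<close>

lemma nsmul_0 [simp]: "nsmul 0 x = 0"
  by (simp add: nsmul_def)

lemma nsmul_Suc: "nsmul (Suc n) x = nsmul n x + x"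
  by (simp add: nsmul_def)

lemma nsmul_add: "nsmul n (x + y) = nsmul n x + nsmul n y"
  by (simp add: nsmul_def sum.distrib)

lemma nsmul_minus: "nsmul n (- x) = - nsmul n x"
  by (simp add: nsmul_def sum_negf)

lemma nsmul_diff: "nsmul n (x - y) = nsmul n x - nsmul n y"
  by (simp add: nsmul_def sum_subtractf)

lemma nsmul_add_left: "nsmul (m + n) x = nsmul m x + nsmul n x"
  by (induction n) (simp_all add: nsmul_Suc add.assoc)

lemma nsmul_mult: "nsmul (m * n) x = nsmul m (nsmul n x)"
  by (induction m) (simp_all add: nsmul_Suc nsmul_add_left add.commute)

lemma zsmul_of_nat [simp]: "zsmul (int n) x = nsmul n x"
  by (simp add: zsmul_def)

lemma zsmul_neg_of_nat [simp]: "zsmul (- int n) x = - nsmul n x"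
  by (cases "n = 0") (simp_all add: zsmul_def)

lemma zsmul_0 [simp]: "zsmul 0 x = 0"
  by (simp add: zsmul_def)

lemma zsmul_1 [simp]: "zsmul 1 x = x"
  by (simp add: zsmul_def nsmul_def)

lemma zsmul_zero [simp]: "zsmul k (0::'a::ab_group_add) = 0"
  by (simp add: zsmul_def nsmul_def)

lemma zsmul_minus_one: "zsmul (- 1) x = - x"
  by (simp add: zsmul_def nsmul_def)

lemma zsmul_add: "zsmul k (x + y) = zsmul k x + zsmul k y"
  by (simp add: zsmul_def nsmul_add)

lemma zsmul_mult: "zsmul (k * l) x = zsmul k (zsmul l x)"
  by (cases k rule: int_cases2; cases l rule: int_cases2)
    (simp_all add: nsmul_mult nsmul_minus flip: of_nat_mult)

lemma additive_if_End_grp: "f \<in> End_grp \<Longrightarrow> additive f"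
  by (simp add: End_grp_def additive_def)

lemma End_grp_add: "f \<in> End_grp \<Longrightarrow> f (x + y) = f x + f y"
  by (simp add: End_grp_def)

lemma End_grp_zero: "f \<in> End_grp \<Longrightarrow> f 0 = 0"
  by (rule additive.zero[OF additive_if_End_grp])

lemma End_grp_minus: "f \<in> End_grp \<Longrightarrow> f (- x) = - f x"
  by (rule additive.minus[OF additive_if_End_grp])

lemma End_grp_diff: "f \<in> End_grp \<Longrightarrow> f (x - y) = f x - f y"
  by (rule additive.diff[OF additive_if_End_grp])

lemma End_grp_sum: "f \<in> End_grp \<Longrightarrow> f (\<Sum>i\<in>I. g i) = (\<Sum>i\<in>I. f (g i))"
  by (rule additive.sum[OF additive_if_End_grp])

lemma End_grp_nsmul: "f \<in> End_grp \<Longrightarrow> f (nsmul n x) = nsmul n (f x)"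
  by (induction n) (simp_all add: nsmul_Suc End_grp_add End_grp_zero)

lemma End_grp_zsmul: "f \<in> End_grp \<Longrightarrow> f (zsmul k x) = zsmul k (f x)"
  by (simp add: zsmul_def End_grp_nsmul End_grp_minus)

lemma End_grp_id: "id \<in> End_grp"
  by (simp add: End_grp_def)

lemma End_grp_comp: "f \<in> End_grp \<Longrightarrow> g \<in> End_grp \<Longrightarrow> f \<circ> g \<in> End_grp"
  by (simp add: End_grp_def)

lemma End_grp_funpow: "f \<in> End_grp \<Longrightarrow> f ^^ n \<in> End_grp"
  by (induction n) (simp_all add: End_grp_id End_grp_comp)

lemma End_center_End_grp: "z \<in> End_center \<Longrightarrow> z \<in> End_grp"
  by (simp add: End_center_def)

lemma End_center_commute:
  assumes "z \<in> End_center" "f \<in> End_grp"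
  shows "z (f x) = f (z x)"
proof -
  have "z \<circ> f = f \<circ> z"
    using assms by (simp add: End_center_def)
  then show ?thesis
    by (simp add: fun_eq_iff)
qed

lemma subgroup_nsmul: "is_subgroup B \<Longrightarrow> x \<in> B \<Longrightarrow> nsmul n x \<in> B"
  by (induction n) (auto simp: nsmul_Suc is_subgroup_def)

lemma subgroup_zsmul: "is_subgroup B \<Longrightarrow> x \<in> B \<Longrightarrow> zsmul k x \<in> B"
  using subgroup_nsmul unfolding zsmul_def is_subgroup_def by auto

lemma subgroup_sum: "is_subgroup B \<Longrightarrow> (\<And>i. i \<in> I \<Longrightarrow> g i \<in> B) \<Longrightarrow> (\<Sum>i\<in>I. g i) \<in> B"
  by (induction I rule: infinite_finite_induct) (auto simp: is_subgroup_def)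

lemma subgroup_nsmul_if_zsmul:
  assumes "is_subgroup B" "k \<noteq> 0" "zsmul k x \<in> B"
  obtains n where "0 < n" "nsmul n x \<in> B"
proof (cases k rule: int_cases2)
  case (nonpos n)
  then have "- nsmul n x \<in> B"
    using assms(3) by simp
  then have "nsmul n x \<in> B"
    using assms(1) unfolding is_subgroup_def by (metis minus_minus)
  then show thesis
    using nonpos assms(2) that by simp
qed (use assms that in simp)

lemma subgroup_range_End_grp:
  assumes f: "f \<in> End_grp"
  shows "is_subgroup (range f)"
proof -
  have "f a + f b \<in> range f" for a b
    unfolding End_grp_add[OF f, symmetric] by (rule rangeI)
  moreover have "- f a \<in> range f" for a
    unfolding End_grp_minus[OF f, symmetric] by (rule rangeI)
  moreover have "0 \<in> range f"
    using rangeI[of f 0] by (simp add: End_grp_zero[OF f])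
  ultimately show ?thesis
    unfolding is_subgroup_def by blast
qed

lemma subgroup_kernel_End_grp: "f \<in> End_grp \<Longrightarrow> is_subgroup {x. f x = 0}"
  by (simp add: is_subgroup_def End_grp_zero End_grp_add End_grp_minus)

lemma torsion_free_nsmul_eq_0:
  "torsion_free TYPE('a::ab_group_add) \<Longrightarrow> 0 < n \<Longrightarrow> nsmul n (x::'a) = 0 \<Longrightarrow> x = 0"
  unfolding torsion_free_def by blast

lemma torsion_free_nsmul_cancel:
  assumes "torsion_free TYPE('a::ab_group_add)" "0 < n" "nsmul n (x::'a) = nsmul n y"
  shows "x = y"
  using torsion_free_nsmul_eq_0[OF assms(1,2), of "x - y"] assms(3) by (simp add: nsmul_diff)

lemma torsion_free_zsmul_eq_0:
  "torsion_free TYPE('a::ab_group_add) \<Longrightarrow> k \<noteq> 0 \<Longrightarrow> zsmul k (x::'a) = 0 \<Longrightarrow> x = 0"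
  by (cases k rule: int_cases2) (simp_all add: torsion_free_nsmul_eq_0)

lemma funpow_image_subset: "f ` C \<subseteq> C \<Longrightarrow> (f ^^ n) ` C \<subseteq> C"
  by (induction n) auto

lemma inj_on_funpow: "f ` C \<subseteq> C \<Longrightarrow> inj_on f C \<Longrightarrow> inj_on (f ^^ n) C"
proof (induction n)
  case (Suc n)
  have "(f ^^ n) ` C \<subseteq> C"
    using Suc.prems(1) by (rule funpow_image_subset)
  then have "inj_on f ((f ^^ n) ` C)"
    by (rule inj_on_subset[OF Suc.prems(2)])
  then have "inj_on (f \<circ> f ^^ n) C"
    using Suc by (intro comp_inj_on)
  then show ?case
    by (simp only: funpow.simps(2))
qed simp

section \<open>Rank\<close>

definition rank_of :: "'a::ab_group_add set \<Rightarrow> nat" where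
  "rank_of X = Max (card ` {S. S \<subseteq> X \<and> lin_indep S})"

lemma
  fixes X :: "'a::ab_group_add set"
  assumes "finite_rank TYPE('a)"
  shows independent_card_le_rank: "S \<subseteq> X \<Longrightarrow> lin_indep S \<Longrightarrow> card S \<le> rank_of X"
    and rank_attained: "\<exists>S. S \<subseteq> X \<and> lin_indep S \<and> card S = rank_of X"
proof -
  obtain N where N: "\<And>S::'a set. lin_indep S \<Longrightarrow> card S \<le> N"
    using assms unfolding finite_rank_def by blast
  let ?cards = "card ` {S. S \<subseteq> X \<and> lin_indep S}"
  have finite: "finite ?cards"
    by (rule finite_subset[of _ "{..N}"]) (auto dest: N)
  show "card S \<le> rank_of X" if "S \<subseteq> X" "lin_indep S"
    unfolding rank_of_def using that by (intro Max_ge[OF finite] imageI) simp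
  have "card {} \<in> ?cards"
    by (rule image_eqI[of _ _ "{}"]) (simp_all add: lin_indep_def)
  then have "rank_of X \<in> ?cards"
    unfolding rank_of_def using Max_in[OF finite] by blast
  then show "\<exists>S. S \<subseteq> X \<and> lin_indep S \<and> card S = rank_of X"
    by auto
qed

lemma rank_mono:
  assumes "finite_rank TYPE('a::ab_group_add)" "(X::'a set) \<subseteq> Y"
  shows "rank_of X \<le> rank_of Y"
proof -
  obtain S where S: "S \<subseteq> X" "lin_indep S" "card S = rank_of X"
    using rank_attained[OF assms(1)] by blast
  have "S \<subseteq> Y"
    using S(1) assms(2) by (rule order_trans)
  then show ?thesis
    using independent_card_le_rank[OF assms(1) _ S(2)] S(3) by simp
qed

lemma family_dependent_beyond_rank:
  fixes w :: "'i \<Rightarrow> 'a::ab_group_add"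
  assumes fr: "finite_rank TYPE('a)" and I: "finite I" "rank_of C < card I" and w: "w ` I \<subseteq> C"
  obtains k where "\<exists>i\<in>I. k i \<noteq> 0" "(\<Sum>i\<in>I. zsmul (k i) (w i)) = 0"
proof (cases "inj_on w I")
  case True
  then have "\<not> lin_indep (w ` I)"
    using independent_card_le_rank[OF fr w] I(2) card_image by fastforce
  then obtain q where q: "(\<Sum>s\<in>w ` I. zsmul (q s) s) = 0" "\<exists>s\<in>w ` I. q s \<noteq> 0"
    using I(1) unfolding lin_indep_def by auto
  show thesis
  proof (rule that[of "q \<circ> w"])
    show "\<exists>i\<in>I. (q \<circ> w) i \<noteq> 0"
      using q(2) by auto
    show "(\<Sum>i\<in>I. zsmul ((q \<circ> w) i) (w i)) = 0"
      using q(1) sum.reindex[OF True, of "\<lambda>s. zsmul (q s) s"] by simp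
  qed
next
  case False
  then obtain i j where ij: "i \<in> I" "j \<in> I" "i \<noteq> j" "w i = w j"
    unfolding inj_on_def by blast
  define k where "k l = (if l = i then 1 else if l = j then - 1 else 0 :: int)" for l
  have "(\<Sum>l\<in>I. zsmul (k l) (w l)) = (\<Sum>l\<in>{i, j}. zsmul (k l) (w l))"
    by (rule sum.mono_neutral_right) (use ij I(1) in \<open>auto simp: k_def\<close>)
  also have "\<dots> = 0"
    using ij by (simp add: k_def zsmul_minus_one)
  finally show thesis
    using ij(1) by (intro that[of k]) (auto simp: k_def)
qed

lemma max_independent_relation:
  fixes C :: "'a::ab_group_add set"
  assumes fr: "finite_rank TYPE('a)"
    and S: "S \<subseteq> C" "lin_indep S" "card S = rank_of C" and c: "c \<in> C"
  obtains k q where "k \<noteq> 0" "zsmul k c + (\<Sum>s\<in>S. zsmul (q s) s) = 0"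
proof (cases "c \<in> S")
  case True
  have "(\<Sum>s\<in>S. zsmul (if s = c then - 1 else 0) s) = (\<Sum>s\<in>S. if s = c then - s else 0)"
    by (rule sum.cong) (simp_all add: zsmul_minus_one)
  also have "\<dots> = - c"
    using True S(2) by (simp add: lin_indep_def)
  finally have "zsmul 1 c + (\<Sum>s\<in>S. zsmul (if s = c then - 1 else 0) s) = 0"
    by simp
  then show thesis
    by (rule that[rotated]) simp
next
  case False
  have finite: "finite S"
    using S(2) by (simp add: lin_indep_def)
  have "\<not> lin_indep (insert c S)"
    using independent_card_le_rank[OF fr, of "insert c S" C] S c False finite by auto
  then obtain q where q: "(\<Sum>s\<in>insert c S. zsmul (q s) s) = 0" "\<exists>s\<in>insert c S. q s \<noteq> 0"
    using finite unfolding lin_indep_def by auto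
  then have rel: "zsmul (q c) c + (\<Sum>s\<in>S. zsmul (q s) s) = 0"
    using False finite by simp
  have "q c \<noteq> 0"
  proof
    assume "q c = 0"
    then have "\<forall>s\<in>S. q s = 0"
      using rel S(2) unfolding lin_indep_def by simp
    then show False
      using q(2) \<open>q c = 0\<close> by blast
  qed
  then show thesis
    using rel by (rule that)
qed

lemma torsion_over_full_rank_subgroup:
  fixes B C :: "'a::ab_group_add set"
  assumes fr: "finite_rank TYPE('a)" and B: "is_subgroup B" "B \<subseteq> C" "rank_of C \<le> rank_of B"
    and c: "c \<in> C"
  obtains n where "0 < n" "nsmul n c \<in> B"
proof -
  obtain S where S: "S \<subseteq> B" "lin_indep S" "card S = rank_of B"
    using rank_attained[OF fr] by blast
  have "card S = rank_of C"
    using S(3) B(3) rank_mono[OF fr B(2)] by simp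
  then obtain k q where k: "k \<noteq> 0" and rel: "zsmul k c + (\<Sum>s\<in>S. zsmul (q s) s) = 0"
    using max_independent_relation[OF fr _ S(2) _ c] S(1) B(2) by blast
  have "(\<Sum>s\<in>S. zsmul (q s) s) \<in> B"
    using S(1) by (intro subgroup_sum[OF B(1)] subgroup_zsmul[OF B(1)]) blast
  then have "zsmul k c \<in> B"
    using rel B(1) unfolding is_subgroup_def by (metis add_eq_0_iff minus_minus)
  then show thesis
    using subgroup_nsmul_if_zsmul[OF B(1) k] that by blast
qed

lemma End_grp_vanishing_on_max_independent:
  fixes C :: "'a::ab_group_add set"
  assumes tf: "torsion_free TYPE('a)" and fr: "finite_rank TYPE('a)" and T: "T \<in> End_grp"
    and S: "S \<subseteq> C" "lin_indep S" "card S = rank_of C" and vanish: "\<forall>s\<in>S. T s = 0"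
    and c: "c \<in> C"
  shows "T c = 0"
proof -
  obtain k q where k: "k \<noteq> 0" "zsmul k c + (\<Sum>s\<in>S. zsmul (q s) s) = 0"
    using max_independent_relation[OF fr S c] by blast
  have "zsmul k (T c) = T (zsmul k c + (\<Sum>s\<in>S. zsmul (q s) s))"
    using vanish by (simp add: End_grp_add[OF T] End_grp_sum[OF T] End_grp_zsmul[OF T])
  then have "zsmul k (T c) = 0"
    using k(2) End_grp_zero[OF T] by simp
  then show ?thesis
    using torsion_free_zsmul_eq_0[OF tf k(1)] by blast
qed

section \<open>Injective endomorphisms of groups of finite rank\<close>

definition endo_poly :: "('a::ab_group_add \<Rightarrow> 'a) \<Rightarrow> (nat \<Rightarrow> int) \<Rightarrow> nat \<Rightarrow> 'a \<Rightarrow> 'a" where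
  "endo_poly \<alpha> c n x = (\<Sum>j<n. zsmul (c j) ((\<alpha> ^^ j) x))"

lemma endo_poly_End_grp: "\<alpha> \<in> End_grp \<Longrightarrow> endo_poly \<alpha> c n \<in> End_grp"
  using End_grp_add[OF End_grp_funpow, of \<alpha>]
  by (simp add: End_grp_def endo_poly_def zsmul_add sum.distrib)

lemma endo_poly_image_subset:
  assumes C: "is_subgroup C" and \<alpha>C: "\<alpha> ` C \<subseteq> C"
  shows "endo_poly \<alpha> c n ` C \<subseteq> C"
proof
  fix y assume "y \<in> endo_poly \<alpha> c n ` C"
  then obtain x where x: "x \<in> C" and y: "y = endo_poly \<alpha> c n x"
    by blast
  have "(\<alpha> ^^ j) x \<in> C" for j
    using funpow_image_subset[OF \<alpha>C] x by blast
  then show "y \<in> C"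
    unfolding y endo_poly_def by (intro subgroup_sum[OF C] subgroup_zsmul[OF C])
qed

lemma endo_poly_Suc_shift:
  "\<alpha> \<in> End_grp \<Longrightarrow>
    endo_poly \<alpha> c (Suc n) x = zsmul (c 0) x + \<alpha> (endo_poly \<alpha> (\<lambda>j. c (Suc j)) n x)"
  unfolding endo_poly_def sum.lessThan_Suc_shift by (simp add: End_grp_sum End_grp_zsmul)

lemma funpow_endo_poly:
  "\<alpha> \<in> End_grp \<Longrightarrow> (\<alpha> ^^ i) (endo_poly \<alpha> c n x) = (\<Sum>j<n. zsmul (c j) ((\<alpha> ^^ (i + j)) x))"
  by (simp add: endo_poly_def End_grp_sum End_grp_zsmul End_grp_funpow funpow_add)

text \<open>
  T is congruent to a nonzero integer k modulo \<alpha> on C. Such maps are closed under composition;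
  one of them that kills a maximal independent subset of C kills all of C, and then k C \<subseteq> \<alpha> C.
\<close>

definition scalar_modulo :: "('a::ab_group_add \<Rightarrow> 'a) \<Rightarrow> 'a set \<Rightarrow> ('a \<Rightarrow> 'a) \<Rightarrow> bool" where
  "scalar_modulo \<alpha> C T \<longleftrightarrow> T \<in> End_grp \<and> T ` C \<subseteq> C \<and>
     (\<exists>k R. k \<noteq> 0 \<and> R \<in> End_grp \<and> R ` C \<subseteq> C \<and> (\<forall>x. T x = zsmul k x + \<alpha> (R x)))"

lemma scalar_modulo_id:
  assumes \<alpha>: "\<alpha> \<in> End_grp" and C: "is_subgroup C"
  shows "scalar_modulo \<alpha> C id"
  unfolding scalar_modulo_def
proof (intro conjI exI[of _ 1] exI[of _ "\<lambda>_. 0"] allI)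
  show "id \<in> End_grp"
    by (rule End_grp_id)
  show "(\<lambda>_. 0) \<in> End_grp"
    by (simp add: End_grp_def)
  show "(\<lambda>_. 0) ` C \<subseteq> C"
    using C by (auto simp: is_subgroup_def)
  show "id x = zsmul 1 x + \<alpha> 0" for x
    by (simp add: End_grp_zero[OF \<alpha>])
qed simp_all

lemma scalar_modulo_endo_poly:
  assumes \<alpha>: "\<alpha> \<in> End_grp" and C: "is_subgroup C" "\<alpha> ` C \<subseteq> C" and "c 0 \<noteq> 0"
  shows "scalar_modulo \<alpha> C (endo_poly \<alpha> c (Suc n))"
  unfolding scalar_modulo_def
proof (intro conjI exI[of _ "c 0"] exI[of _ "endo_poly \<alpha> (\<lambda>j. c (Suc j)) n"] allI)
  show "endo_poly \<alpha> c (Suc n) \<in> End_grp" "endo_poly \<alpha> (\<lambda>j. c (Suc j)) n \<in> End_grp"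
    using \<alpha> by (rule endo_poly_End_grp)+
  show "endo_poly \<alpha> c (Suc n) ` C \<subseteq> C" "endo_poly \<alpha> (\<lambda>j. c (Suc j)) n ` C \<subseteq> C"
    using C by (rule endo_poly_image_subset)+
  show "endo_poly \<alpha> c (Suc n) x = zsmul (c 0) x + \<alpha> (endo_poly \<alpha> (\<lambda>j. c (Suc j)) n x)" for x
    using \<alpha> by (rule endo_poly_Suc_shift)
qed fact

lemma scalar_modulo_comp:
  assumes \<alpha>: "\<alpha> \<in> End_grp" and C: "is_subgroup C"
    and "scalar_modulo \<alpha> C T1" "scalar_modulo \<alpha> C T2"
  shows "scalar_modulo \<alpha> C (T1 \<circ> T2)"
proof -
  obtain k1 R1 where T1: "T1 \<in> End_grp" "T1 ` C \<subseteq> C" "k1 \<noteq> 0" "R1 \<in> End_grp" "R1 ` C \<subseteq> C"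
    "\<And>x. T1 x = zsmul k1 x + \<alpha> (R1 x)"
    using assms(3) unfolding scalar_modulo_def by blast
  obtain k2 R2 where T2: "T2 \<in> End_grp" "T2 ` C \<subseteq> C" "k2 \<noteq> 0" "R2 \<in> End_grp" "R2 ` C \<subseteq> C"
    "\<And>x. T2 x = zsmul k2 x + \<alpha> (R2 x)"
    using assms(4) unfolding scalar_modulo_def by blast
  define R where "R x = zsmul k1 (R2 x) + R1 (T2 x)" for x
  have "R \<in> End_grp"
    unfolding End_grp_def R_def
    by (simp add: End_grp_add[OF T2(4)] End_grp_add[OF T2(1)] End_grp_add[OF T1(4)] zsmul_add ac_simps)
  moreover have "R ` C \<subseteq> C"
  proof
    fix y assume "y \<in> R ` C"
    then obtain x where x: "x \<in> C" and y: "y = R x"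
      by blast
    have "zsmul k1 (R2 x) \<in> C"
      using subgroup_zsmul[OF C] T2(5) x by blast
    moreover have "R1 (T2 x) \<in> C"
      using T1(5) T2(2) x by blast
    ultimately show "y \<in> C"
      using C unfolding y R_def is_subgroup_def by blast
  qed
  moreover have "(T1 \<circ> T2) x = zsmul (k1 * k2) x + \<alpha> (R x)" for x
    by (simp add: T1(6) T2(6) R_def zsmul_add zsmul_mult End_grp_add[OF \<alpha>] End_grp_zsmul[OF \<alpha>]
        add.assoc)
  moreover have "T1 \<circ> T2 \<in> End_grp"
    using T1(1) T2(1) by (rule End_grp_comp)
  moreover have "(T1 \<circ> T2) ` C \<subseteq> C"
    using T1(2) T2(2) by (auto simp: image_comp[symmetric])
  moreover have "k1 * k2 \<noteq> 0"
    using T1(3) T2(3) by simp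
  ultimately show ?thesis
    unfolding scalar_modulo_def by blast
qed

text \<open>
  Cancelling the lowest power \<alpha>^i0 that occurs in the relation (\<alpha> is injective on C) leaves
  T = \<Sum>j k (i0 + j) \<alpha>^j, which kills u.
\<close>

lemma orbit_relation_scalar_modulo:
  fixes \<alpha> :: "'a::ab_group_add \<Rightarrow> 'a"
  assumes \<alpha>: "\<alpha> \<in> End_grp" and C: "is_subgroup C" and \<alpha>C: "\<alpha> ` C \<subseteq> C" and inj: "inj_on \<alpha> C"
    and u: "u \<in> C" and nonzero: "i1 \<le> r" "k i1 \<noteq> 0"
    and relation: "(\<Sum>i\<le>r. zsmul (k i) ((\<alpha> ^^ i) u)) = 0"
  obtains T where "scalar_modulo \<alpha> C T" "T u = 0"
proof -
  define i0 where "i0 = (LEAST i. k i \<noteq> 0)"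
  have ki0: "k i0 \<noteq> 0"
    unfolding i0_def using nonzero(2) by (rule LeastI)
  have "i0 \<le> i1"
    unfolding i0_def using nonzero(2) by (rule Least_le)
  then have i0r: "i0 \<le> r"
    using nonzero(1) by simp
  have below_i0: "k i = 0" if "i < i0" for i
    using not_less_Least[of i "\<lambda>i. k i \<noteq> 0"] that unfolding i0_def by blast
  define T where "T = endo_poly \<alpha> (\<lambda>j. k (i0 + j)) (Suc (r - i0))"
  have "(\<alpha> ^^ i0) (T u) = (\<Sum>j\<in>{0..r - i0}. zsmul (k (i0 + j)) ((\<alpha> ^^ (i0 + j)) u))"
    by (simp add: T_def funpow_endo_poly[OF \<alpha>] atLeast0AtMost lessThan_Suc_atMost)
  also have "\<dots> = (\<Sum>i\<in>{i0..r}. zsmul (k i) ((\<alpha> ^^ i) u))"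
    using sum.atLeastAtMost_shift_0[OF i0r, of "\<lambda>i. zsmul (k i) ((\<alpha> ^^ i) u)"]
    by (simp add: comp_def)
  also have "\<dots> = (\<Sum>i\<le>r. zsmul (k i) ((\<alpha> ^^ i) u))"
    by (rule sum.mono_neutral_left) (auto simp: below_i0)
  also have "\<dots> = (\<alpha> ^^ i0) 0"
    using relation End_grp_zero[OF End_grp_funpow[OF \<alpha>]] by simp
  finally have eq: "(\<alpha> ^^ i0) (T u) = (\<alpha> ^^ i0) 0" .
  have "T u \<in> C"
    using endo_poly_image_subset[OF C \<alpha>C] u unfolding T_def by blast
  moreover have "0 \<in> C"
    using C by (simp add: is_subgroup_def)
  ultimately have "T u = 0"
    using inj_onD[OF inj_on_funpow[OF \<alpha>C inj] eq] by blast
  moreover have "scalar_modulo \<alpha> C T"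
    unfolding T_def using scalar_modulo_endo_poly[OF \<alpha> C \<alpha>C] ki0 by simp
  ultimately show thesis
    using that by blast
qed

lemma scalar_modulo_annihilating:
  fixes \<alpha> :: "'a::ab_group_add \<Rightarrow> 'a"
  assumes fr: "finite_rank TYPE('a)" and \<alpha>: "\<alpha> \<in> End_grp" and C: "is_subgroup C"
    and \<alpha>C: "\<alpha> ` C \<subseteq> C" and inj: "inj_on \<alpha> C" and u: "u \<in> C"
  obtains T where "scalar_modulo \<alpha> C T" "T u = 0"
proof -
  define r where "r = rank_of C"
  have "(\<alpha> ^^ i) u \<in> C" for i
    using funpow_image_subset[OF \<alpha>C] u by (simp add: image_subset_iff)
  then have orbit: "(\<lambda>i. (\<alpha> ^^ i) u) ` {..r} \<subseteq> C"
    by blast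
  have rank: "rank_of C < card {..r}"
    by (simp add: r_def)
  obtain k where k: "\<exists>i\<in>{..r}. k i \<noteq> 0" "(\<Sum>i\<le>r. zsmul (k i) ((\<alpha> ^^ i) u)) = 0"
    by (rule family_dependent_beyond_rank[OF fr finite_atMost rank orbit])
  then obtain i1 where "i1 \<le> r" "k i1 \<noteq> 0"
    by blast
  then show thesis
    using orbit_relation_scalar_modulo[OF \<alpha> C \<alpha>C inj u _ _ k(2)] that by blast
qed

lemma scalar_modulo_annihilating_finite:
  fixes \<alpha> :: "'a::ab_group_add \<Rightarrow> 'a"
  assumes fr: "finite_rank TYPE('a)" and \<alpha>: "\<alpha> \<in> End_grp" and C: "is_subgroup C"
    and \<alpha>C: "\<alpha> ` C \<subseteq> C" and inj: "inj_on \<alpha> C" and S: "finite S" "S \<subseteq> C"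
  shows "\<exists>T. scalar_modulo \<alpha> C T \<and> (\<forall>s\<in>S. T s = 0)"
  using S
proof (induction S rule: finite_induct)
  case empty
  then show ?case
    using scalar_modulo_id[OF \<alpha> C] by blast
next
  case (insert s S)
  then obtain T0 where T0: "scalar_modulo \<alpha> C T0" "\<forall>s\<in>S. T0 s = 0"
    by blast
  have "T0 s \<in> C"
    using T0(1) insert.prems unfolding scalar_modulo_def by blast
  then obtain T where T: "scalar_modulo \<alpha> C T" "T (T0 s) = 0"
    using scalar_modulo_annihilating[OF fr \<alpha> C \<alpha>C inj] by blast
  then have "\<forall>s'\<in>insert s S. (T \<circ> T0) s' = 0"
    using T0(2) End_grp_zero unfolding scalar_modulo_def by auto
  then show ?case
    using scalar_modulo_comp[OF \<alpha> C T(1) T0(1)] by blast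
qed

lemma injective_endo_image_finite_index:
  fixes \<alpha> :: "'a::ab_group_add \<Rightarrow> 'a"
  assumes tf: "torsion_free TYPE('a)" and fr: "finite_rank TYPE('a)" and \<alpha>: "\<alpha> \<in> End_grp"
    and C: "is_subgroup C" and \<alpha>C: "\<alpha> ` C \<subseteq> C" and inj: "inj_on \<alpha> C"
  shows "\<exists>m>0. \<forall>c\<in>C. \<exists>c'\<in>C. nsmul m c = \<alpha> c'"
proof -
  obtain S where S: "S \<subseteq> C" "lin_indep S" "card S = rank_of C"
    using rank_attained[OF fr] by blast
  have "finite S"
    using S(2) by (simp add: lin_indep_def)
  then obtain T where T: "scalar_modulo \<alpha> C T" "\<forall>s\<in>S. T s = 0"
    using scalar_modulo_annihilating_finite[OF fr \<alpha> C \<alpha>C inj _ S(1)] by blast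
  then obtain k R where kR: "T \<in> End_grp" "k \<noteq> 0" "R ` C \<subseteq> C" "\<And>x. T x = zsmul k x + \<alpha> (R x)"
    unfolding scalar_modulo_def by blast
  have "nsmul (nat (k * k)) c = \<alpha> (zsmul k (- R c))" if c: "c \<in> C" for c
  proof -
    have "T c = 0"
      using End_grp_vanishing_on_max_independent[OF tf fr kR(1) S T(2) c] .
    then have "zsmul k c = - \<alpha> (R c)"
      using kR(4) by (simp add: eq_neg_iff_add_eq_0)
    then have "zsmul k c = \<alpha> (- R c)"
      by (simp add: End_grp_minus[OF \<alpha>])
    then have "zsmul (k * k) c = \<alpha> (zsmul k (- R c))"
      by (simp add: zsmul_mult End_grp_zsmul[OF \<alpha>])
    then show ?thesis
      by (metis zero_le_square nat_0_le zsmul_of_nat)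
  qed
  moreover have "zsmul k (- R c) \<in> C" if "c \<in> C" for c
    using that kR(3) C subgroup_zsmul unfolding is_subgroup_def by blast
  moreover have "0 < nat (k * k)"
    using kR(2) by (auto simp: zero_less_mult_iff linorder_neq_iff)
  ultimately show ?thesis
    by blast
qed

section \<open>Fitting's lemma\<close>

lemma kernel_of_power_stable:
  fixes x :: "'a::ab_group_add \<Rightarrow> 'a"
  assumes tf: "torsion_free TYPE('a)" and fr: "finite_rank TYPE('a)" and x: "x \<in> End_grp"
  obtains k where "0 < k" "\<And>c. (x ^^ k) ((x ^^ k) c) = 0 \<Longrightarrow> (x ^^ k) c = 0"
proof -
  define K where "K j = {v. (x ^^ j) v = 0}" for j
  have K_mono: "K i \<subseteq> K j" if "i \<le> j" for i j
  proof
    fix v assume "v \<in> K i"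
    moreover have "(x ^^ j) v = (x ^^ (j - i)) ((x ^^ i) v)"
      using that by (metis funpow_add le_add_diff_inverse2 comp_apply)
    ultimately show "v \<in> K j"
      using End_grp_zero[OF End_grp_funpow[OF x]] by (simp add: K_def)
  qed
  obtain k0 where k0: "\<And>j. rank_of (K j) \<le> rank_of (K k0)"
    using Lattices_Big.ex_has_greatest_nat[of "\<lambda>_. True" 0 "\<lambda>j. rank_of (K j)"
        "Suc (rank_of (UNIV :: 'a set))"] rank_mono[OF fr] by (auto simp: less_Suc_eq_le)
  define k where "k = Suc k0"
  have rank_le: "rank_of (K (k + k)) \<le> rank_of (K k)"
    using k0[of "k + k"] rank_mono[OF fr K_mono[of k0 k]] unfolding k_def by linarith
  show thesis
  proof (rule that)
    show "0 < k"
      by (simp add: k_def)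
    fix c assume "(x ^^ k) ((x ^^ k) c) = 0"
    then have "c \<in> K (k + k)"
      by (simp add: K_def funpow_add)
    then obtain n where "0 < n" "nsmul n c \<in> K k"
      using torsion_over_full_rank_subgroup[OF fr _ K_mono rank_le]
        subgroup_kernel_End_grp[OF End_grp_funpow[OF x]] unfolding K_def by auto
    then show "(x ^^ k) c = 0"
      using End_grp_nsmul[OF End_grp_funpow[OF x]] torsion_free_nsmul_eq_0[OF tf]
      unfolding K_def by auto
  qed
qed

lemma quasi_decomposition_by_stable_endo:
  fixes p :: "'a::ab_group_add \<Rightarrow> 'a"
  assumes tf: "torsion_free TYPE('a)" and fr: "finite_rank TYPE('a)" and p: "p \<in> End_grp"
    and stable: "\<And>c. p (p c) = 0 \<Longrightarrow> p c = 0"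
  obtains m where "0 < m" "\<And>w. \<exists>a. p (nsmul m w - p a) = 0"
proof -
  have "inj_on p (range p)"
  proof (rule inj_onI)
    fix u v assume "u \<in> range p" "v \<in> range p" "p u = p v"
    then obtain a b where "u = p a" "v = p b" "p (p (a - b)) = 0"
      by (auto simp: End_grp_diff[OF p])
    then show "u = v"
      using stable[of "a - b"] by (simp add: End_grp_diff[OF p])
  qed
  then obtain m where m: "0 < m" "\<forall>c\<in>range p. \<exists>c'\<in>range p. nsmul m c = p c'"
    using injective_endo_image_finite_index[OF tf fr p subgroup_range_End_grp[OF p]] by blast
  show thesis
  proof (rule that[OF m(1)])
    fix w
    obtain a where "nsmul m (p w) = p (p a)"
      using m(2) by blast
    then have "p (nsmul m w - p a) = 0"
      by (simp add: End_grp_diff[OF p] End_grp_nsmul[OF p])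
    then show "\<exists>a. p (nsmul m w - p a) = 0" ..
  qed
qed

lemma strongly_indecomposableD:
  assumes "strongly_indecomposable TYPE('a::ab_group_add)"
    and "is_subgroup (B::'a set)" "is_subgroup D" "B \<inter> D = {0}" "0 < n"
    and "\<And>x. \<exists>b\<in>B. \<exists>d\<in>D. nsmul n x = b + d"
  shows "B = {0} \<or> D = {0}"
  using assms unfolding strongly_indecomposable_def by blast

definition quasi_surjective :: "('a::ab_group_add \<Rightarrow> 'a) \<Rightarrow> bool" where
  "quasi_surjective f \<longleftrightarrow> (\<exists>m>0. \<forall>w. \<exists>b. nsmul m w = f b)"

lemma quasi_surjective_funpow_imp:
  assumes "0 < k" "quasi_surjective (x ^^ k)"
  shows "quasi_surjective x"
proof -
  obtain n where "k = Suc n"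
    using assms(1) gr0_implies_Suc by blast
  then have "(x ^^ k) b = x ((x ^^ n) b)" for b
    by simp
  then show ?thesis
    using assms(2) unfolding quasi_surjective_def by metis
qed

lemma nilpotent_or_quasi_surjective:
  fixes x :: "'a::ab_group_add \<Rightarrow> 'a"
  assumes tf: "torsion_free TYPE('a)" and fr: "finite_rank TYPE('a)"
    and si: "strongly_indecomposable TYPE('a)" and x: "x \<in> End_grp"
  shows "(\<exists>k. x ^^ k = (\<lambda>_. 0)) \<or> quasi_surjective x"
proof -
  obtain k where k: "0 < k" "\<And>c. (x ^^ k) ((x ^^ k) c) = 0 \<Longrightarrow> (x ^^ k) c = 0"
    using kernel_of_power_stable[OF tf fr x] by blast
  define p where "p = x ^^ k"
  have p: "p \<in> End_grp"
    unfolding p_def using End_grp_funpow[OF x] .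
  obtain m where m: "0 < m" "\<And>w. \<exists>a. p (nsmul m w - p a) = 0"
    using quasi_decomposition_by_stable_endo[OF tf fr p k(2)[folded p_def]] by blast
  have "{v. p v = 0} = {0} \<or> range p = {0}"
  proof (rule strongly_indecomposableD[OF si subgroup_kernel_End_grp[OF p]
        subgroup_range_End_grp[OF p] _ m(1)])
    show "{v. p v = 0} \<inter> range p = {0}"
      using k(2) End_grp_zero[OF p] by (auto simp: p_def)
    fix w
    obtain a where "p (nsmul m w - p a) = 0"
      using m(2) by blast
    then show "\<exists>b\<in>{v. p v = 0}. \<exists>d\<in>range p. nsmul m w = b + d"
      by (intro bexI[of _ "nsmul m w - p a"] bexI[of _ "p a"]) auto
  qed
  then show ?thesis
  proof
    assume trivial_kernel: "{v. p v = 0} = {0}"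
    have "nsmul m w = p a" if "p (nsmul m w - p a) = 0" for w a
    proof -
      have "nsmul m w - p a \<in> {v. p v = 0}"
        using that by simp
      then show ?thesis
        unfolding trivial_kernel by simp
    qed
    then have "quasi_surjective p"
      using m unfolding quasi_surjective_def by blast
    then show ?thesis
      using quasi_surjective_funpow_imp[OF k(1)] unfolding p_def by blast
  next
    assume "range p = {0}"
    then have "x ^^ k = (\<lambda>_. 0)"
      unfolding p_def by (auto simp: fun_eq_iff)
    then show ?thesis
      by blast
  qed
qed

section \<open>Central endomorphisms and the pseudo-socle\<close>

lemma pure_subgroupI:
  "is_subgroup B \<Longrightarrow> (\<And>n y. 0 < n \<Longrightarrow> nsmul n y \<in> B \<Longrightarrow> y \<in> B) \<Longrightarrow> pure_subgroup B"
  unfolding pure_subgroup_def by blast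

lemma pure_subgroupD:
  assumes tf: "torsion_free TYPE('a::ab_group_add)" and B: "pure_subgroup (B::'a set)"
    and n: "0 < n" and "nsmul n y \<in> B"
  shows "y \<in> B"
proof -
  obtain b where b: "b \<in> B" "nsmul n b = nsmul n y"
    using B n \<open>nsmul n y \<in> B\<close> unfolding pure_subgroup_def by blast
  have "b = y"
    using tf n b(2) by (rule torsion_free_nsmul_cancel)
  then show ?thesis
    using b(1) by simp
qed

lemma pure_fi_Int:
  assumes tf: "torsion_free TYPE('a::ab_group_add)" and B: "pure_fi (B::'a set)" and C: "pure_fi C"
  shows "pure_fi (B \<inter> C)"
proof -
  have "is_subgroup (B \<inter> C)"
    using B C unfolding pure_fi_def pure_subgroup_def is_subgroup_def by blast
  moreover have "y \<in> B \<inter> C" if "0 < n" "nsmul n y \<in> B \<inter> C" for n y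
    using B C pure_subgroupD[OF tf _ that(1)] that(2) unfolding pure_fi_def by blast
  ultimately have "pure_subgroup (B \<inter> C)"
    by (rule pure_subgroupI)
  moreover have "fully_invariant (B \<inter> C)"
    using B C unfolding pure_fi_def fully_invariant_def by blast
  ultimately show ?thesis
    unfolding pure_fi_def ..
qed

lemma pure_fi_kernel_of_central:
  assumes tf: "torsion_free TYPE('a::ab_group_add)" and x: "(x::'a \<Rightarrow> 'a) \<in> End_center"
  shows "pure_fi {v. x v = 0}"
proof -
  have x_End: "x \<in> End_grp"
    using x by (rule End_center_End_grp)
  have "y \<in> {v. x v = 0}" if "0 < n" "nsmul n y \<in> {v. x v = 0}" for n y
    using that End_grp_nsmul[OF x_End] torsion_free_nsmul_eq_0[OF tf] by simp
  with subgroup_kernel_End_grp[OF x_End] have "pure_subgroup {v. x v = 0}"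
    by (rule pure_subgroupI)
  moreover have "f ` {v. x v = 0} \<subseteq> {v. x v = 0}" if f: "f \<in> End_grp" for f
    using End_center_commute[OF x f] End_grp_zero[OF f] by auto
  ultimately show ?thesis
    unfolding pure_fi_def fully_invariant_def by blast
qed

lemma minimal_pure_fi_subset_kernel:
  assumes tf: "torsion_free TYPE('a::ab_group_add)" and x: "(x::'a \<Rightarrow> 'a) \<in> End_center"
    and nil: "x ^^ k = (\<lambda>_. 0)" and M: "minimal_pure_fi M"
  shows "M \<subseteq> {v. x v = 0}"
proof (rule ccontr)
  assume not_subset: "\<not> M \<subseteq> {v. x v = 0}"
  have "pure_fi (M \<inter> {v. x v = 0})"
    using pure_fi_Int[OF tf _ pure_fi_kernel_of_central[OF tf x]] M
    by (simp add: minimal_pure_fi_def)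
  then have trivial: "M \<inter> {v. x v = 0} = {0}"
    using M not_subset unfolding minimal_pure_fi_def by blast
  have xM: "x ` M \<subseteq> M"
    using M End_center_End_grp[OF x]
    unfolding minimal_pure_fi_def pure_fi_def fully_invariant_def by blast
  have "v = 0" if "v \<in> M" "(x ^^ j) v = 0" for j v
    using that
  proof (induction j arbitrary: v)
    case (Suc j)
    have "x v \<in> M"
      using xM Suc.prems(1) by blast
    moreover have "(x ^^ j) (x v) = 0"
      using Suc.prems(2) by (simp only: funpow_Suc_right comp_apply)
    ultimately have "x v = 0"
      by (rule Suc.IH)
    then show ?case
      using trivial Suc.prems(1) by blast
  qed simp
  then have "M \<subseteq> {0}"
    using nil by (auto dest: fun_cong)
  then show False
    using M unfolding minimal_pure_fi_def pure_fi_def pure_subgroup_def is_subgroup_def by blast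
qed

lemma nilpotent_central_eq_zero:
  assumes tf: "torsion_free TYPE('a::ab_group_add)" and ps: "PSoc TYPE('a) = UNIV"
    and x: "(x::'a \<Rightarrow> 'a) \<in> End_center" and nil: "x ^^ k = (\<lambda>_. 0)"
  shows "x = (\<lambda>_. 0)"
proof -
  have "pure_subgroup {v. x v = 0}"
    using pure_fi_kernel_of_central[OF tf x] by (simp add: pure_fi_def)
  moreover have "\<Union>{M. minimal_pure_fi M} \<subseteq> {v. x v = 0}"
    using minimal_pure_fi_subset_kernel[OF tf x nil] by blast
  ultimately have "PSoc TYPE('a) \<subseteq> {v. x v = 0}"
    unfolding PSoc_def pure_hull_def by blast
  then show ?thesis
    using ps by auto
qed

lemma centrally_essential_imp_commutative:
  assumes tf: "torsion_free TYPE('a::ab_group_add)"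
    and qs: "\<And>x::'a \<Rightarrow> 'a. x \<in> End_center \<Longrightarrow> x \<noteq> (\<lambda>_. 0) \<Longrightarrow> quasi_surjective x"
    and ce: "End_centrally_essential TYPE('a)"
  shows "End_commutative TYPE('a)"
  unfolding End_commutative_def
proof (intro ballI)
  fix f g :: "'a \<Rightarrow> 'a" assume f: "f \<in> End_grp" and g: "g \<in> End_grp"
  show "f \<circ> g = g \<circ> f"
  proof (cases "f = (\<lambda>_. 0)")
    case True
    then show ?thesis
      using End_grp_zero[OF g] by auto
  next
    case False
    then obtain x y where x: "x \<in> End_center" "x \<noteq> (\<lambda>_. 0)" and y: "y \<in> End_center"
      and fx: "f \<circ> x = y"
      using ce f unfolding End_centrally_essential_def by blast
    obtain m where m: "0 < m" "\<And>w. \<exists>b. nsmul m w = x b"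
      using qs[OF x] unfolding quasi_surjective_def by blast
    have on_image: "f (g (x b)) = g (f (x b))" for b
    proof -
      have "f (g (x b)) = f (x (g b))"
        using End_center_commute[OF x(1) g] by simp
      also have "\<dots> = y (g b)"
        using fx by auto
      also have "\<dots> = g (y b)"
        using End_center_commute[OF y g] .
      also have "\<dots> = g (f (x b))"
        using fx by auto
      finally show ?thesis .
    qed
    show ?thesis
    proof
      fix w
      obtain b where "nsmul m w = x b"
        using m(2) by blast
      then have "nsmul m (f (g w)) = nsmul m (g (f w))"
        using on_image by (simp flip: End_grp_nsmul[OF f] End_grp_nsmul[OF g])
      then show "(f \<circ> g) w = (g \<circ> f) w"
        using torsion_free_nsmul_cancel[OF tf m(1)] by simp
    qed
  qed
qed

lemma commutative_imp_centrally_essential: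
  assumes "End_commutative TYPE('a::ab_group_add)"
  shows "End_centrally_essential TYPE('a)"
  unfolding End_centrally_essential_def
proof (intro ballI impI)
  fix a :: "'a \<Rightarrow> 'a" assume a: "a \<in> End_grp" "a \<noteq> (\<lambda>_. 0)"
  then have "id \<noteq> (\<lambda>_::'a. 0::'a)"
    by (auto simp: fun_eq_iff)
  moreover have "id \<in> End_center" "a \<in> End_center"
    using assms a End_grp_id unfolding End_center_def End_commutative_def by auto
  ultimately show "\<exists>x\<in>End_center. \<exists>y\<in>End_center. x \<noteq> (\<lambda>_. 0) \<and> y \<noteq> (\<lambda>_. 0) \<and> a \<circ> x = y"
    using a(2) by (intro bexI[of _ id] bexI[of _ a]) auto
qed

theorem proposition3p3:
  assumes "torsion_free TYPE('a::ab_group_add)"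
    and "finite_rank TYPE('a)"
    and "strongly_indecomposable TYPE('a)"
    and "PSoc TYPE('a) = UNIV"
  shows "End_centrally_essential TYPE('a) \<longleftrightarrow> End_commutative TYPE('a)"
proof
  have "quasi_surjective x" if "x \<in> End_center" "x \<noteq> (\<lambda>_. 0)" for x :: "'a \<Rightarrow> 'a"
    using nilpotent_or_quasi_surjective[OF assms(1-3) End_center_End_grp[OF that(1)]]
      nilpotent_central_eq_zero[OF assms(1,4) that(1)] that(2) by blast
  then show "End_centrally_essential TYPE('a) \<Longrightarrow> End_commutative TYPE('a)"
    using centrally_essential_imp_commutative[OF assms(1)] by blast
  show "End_commutative TYPE('a) \<Longrightarrow> End_centrally_essential TYPE('a)"
    by (rule commutative_imp_centrally_essential)
qed

end
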